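(* Let $X$ be a topological space, let $(S,\mathcal S)$ be an $\alpha$-scaffold in $X$, and let $\mathcal U$ be a collection of open subsets of $X$ with $|\mathcal U|<\mathfrak b$. Then there exists $S'\le_{\mathcal S}S$ such that every $U\in\mathcal U$ with $\mathrm{cor}\,S'\in U$ contains all but finitely many $T\in\mathcal S'^-$, where $\mathcal S'$ is the stratification of $S'$ witnessing $S'\le_{\mathcal S}S$.
   Context: $\mathfrak b$ is the least cardinality of an unbounded (with respect to eventual domination) family in $\omega^\omega$. Scaffolds in a space $X$ are defined by recursion. A pair $(S,\mathcal S)$ with $S\subseteq X$, $\mathcal S\subseteq 2^S$ is: (S.0) a $0$-scaffold if $S=\{x\}$, $\mathcal S=\{S\}$; then $\mathrm{ht}(S)=\mathrm{ht}_S(x)=0$ and $\mathrm{cor}\,S=x$. (S.1) an $\alpha$-scaffold if there are $x\in S$, pairwise disjoint open sets $U_n\subseteq X$, and $\alpha_n$-scaffolds $(S_n,\mathcal S_n)$ $(n\in\omega)$ with $(\alpha_n)$ nondecreasing, $\alpha=\min\{\beta:\beta>\alpha_n\text{ for all }n\}$, $\mathrm{cor}\,S_n\to x$, $\overline{S_n}\subseteq U_n$, $x\notin\overline{U_n}$, $S=\{x\}\cup\bigcup_nS_n$, $\mathcal S=\{S\}\cup\bigcup_n\mathcal S_n$; then $\mathrm{ht}(S)=\mathrm{ht}_S(x)=\alpha$, $\mathrm{ht}_S(x')=\mathrm{ht}_{S_n}(x')$ for $x'\in S_n$, and $\mathrm{cor}\,S=x$. $\mathcal S$ is called a stratification of $S$.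 For $S''\in\mathcal S$ let $\mathcal S|_{S''}=\{T\in\mathcal S:T\subseteq S''\}$. $\mathcal S^-$ is the set of $\subseteq$-maximal elements of $\mathcal S\setminus\{S\}$. Proper subscaffolds are defined recursively: for $S'\subseteq S$, $S'\le_{\mathcal S}S$ means $\mathrm{cor}\,S'=\mathrm{cor}\,S$ and there is a stratification $\mathcal S'$ of $S'$ such that $\mathcal S'^-\ne\emptyset$ whenever $\mathcal S^-\neq\emptyset$, and each $\beta$-scaffold $B'\in\mathcal S'^-$ satisfies $B'\le_{\mathcal S|_B}B$ for some $\beta$-scaffold $B\in\mathcal S^-$. *)

theory Defs
  imports "HOL-Analysis.Analysis"
begin

(* Ordinals are represented as well-orders on subsets of nat (all scaffold heights are
   countable ordinals), compared with the library's <o, <=o, =o. *)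

definition least_strict_ub :: "nat rel \<Rightarrow> (nat \<Rightarrow> nat rel) \<Rightarrow> bool" where
  "least_strict_ub \<alpha> \<alpha>s \<longleftrightarrow> Well_order \<alpha> \<and> (\<forall>n. ordLess2 (\<alpha>s n) \<alpha>) \<and>
     (\<forall>\<beta>::nat rel. Well_order \<beta> \<and> (\<forall>n. ordLess2 (\<alpha>s n) \<beta>) \<longrightarrow> ordLeq2 \<alpha> \<beta>)"

(* scaffold X \<alpha> x S SS : (S,SS) is an \<alpha>-scaffold in X with cor S = x *)
inductive scaffold :: "'a topology \<Rightarrow> nat rel \<Rightarrow> 'a \<Rightarrow> 'a set \<Rightarrow> 'a set set \<Rightarrow> bool"
  for X :: "'a topology" where
  zero: "\<lbrakk> Well_order \<alpha>; Field \<alpha> = {}; x \<in> topspace X \<rbrakk> \<Longrightarrow> scaffold X \<alpha> x {x} {{x}}"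
| step: "\<lbrakk> \<And>n. scaffold X (\<alpha>s n) (xs n) (Ss n) (SSs n);
           \<And>n. ordLeq2 (\<alpha>s n) (\<alpha>s (Suc n));
           least_strict_ub \<alpha> \<alpha>s;
           x \<in> topspace X;
           limitin X xs x sequentially;
           \<And>n. openin X (Us n);
           \<And>m n. m \<noteq> n \<Longrightarrow> Us m \<inter> Us n = {};
           \<And>n. X closure_of (Ss n) \<subseteq> Us n;
           \<And>n. x \<notin> X closure_of (Us n) \<rbrakk>
         \<Longrightarrow> scaffold X \<alpha> x ({x} \<union> (\<Union>n. Ss n)) ({{x} \<union> (\<Union>n. Ss n)} \<union> (\<Union>n. SSs n))"

definition is_scaffold :: "'a topology \<Rightarrow> nat rel \<Rightarrow> 'a set \<Rightarrow> 'a set set \<Rightarrow> bool" where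
  "is_scaffold X \<alpha> S SS \<longleftrightarrow> (\<exists>x. scaffold X \<alpha> x S SS)"

definition stratification :: "'a topology \<Rightarrow> 'a set \<Rightarrow> 'a set set \<Rightarrow> bool" where
  "stratification X S SS \<longleftrightarrow> (\<exists>\<alpha> x. scaffold X \<alpha> x S SS)"

definition cor :: "'a topology \<Rightarrow> 'a set \<Rightarrow> 'a set set \<Rightarrow> 'a" where
  "cor X S SS = (THE x. \<exists>\<alpha>. scaffold X \<alpha> x S SS)"

definition restr :: "'a set set \<Rightarrow> 'a set \<Rightarrow> 'a set set" where
  "restr SS T = {T' \<in> SS. T' \<subseteq> T}"

definition minus_strat :: "'a set \<Rightarrow> 'a set set \<Rightarrow> 'a set set" where
  "minus_strat S SS = {T \<in> SS - {S}. \<forall>T' \<in> SS - {S}. T \<subseteq> T' \<longrightarrow> T' = T}"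

(* subscaf X S' SS' S SS : S' \<le>_SS S, witnessed by the stratification SS' of S' *)
inductive subscaf :: "'a topology \<Rightarrow> 'a set \<Rightarrow> 'a set set \<Rightarrow> 'a set \<Rightarrow> 'a set set \<Rightarrow> bool"
  for X :: "'a topology" where
  "\<lbrakk> S' \<subseteq> S;
     stratification X S' SS';
     cor X S' SS' = cor X S SS;
     minus_strat S SS \<noteq> {} \<longrightarrow> minus_strat S' SS' \<noteq> {};
     \<forall>B' \<in> minus_strat S' SS'. \<forall>\<beta>. is_scaffold X \<beta> B' (restr SS' B') \<longrightarrow>
        (\<exists>B \<in> minus_strat S SS. is_scaffold X \<beta> B (restr SS B) \<and>
             subscaf X B' (restr SS' B') B (restr SS B)) \<rbrakk>
   \<Longrightarrow> subscaf X S' SS' S SS"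

definition ev_dom :: "(nat \<Rightarrow> nat) \<Rightarrow> (nat \<Rightarrow> nat) \<Rightarrow> bool" where
  "ev_dom f g \<longleftrightarrow> (\<forall>\<^sub>F n in sequentially. f n \<le> g n)"

definition unbounded_family :: "(nat \<Rightarrow> nat) set \<Rightarrow> bool" where
  "unbounded_family F \<longleftrightarrow> \<not> (\<exists>g. \<forall>f \<in> F. ev_dom f g)"

(* |A| < \<bb>, where \<bb> is the least cardinality of an unbounded family *)
definition card_less_b :: "'b set \<Rightarrow> bool" where
  "card_less_b A \<longleftrightarrow> (\<forall>F. unbounded_family F \<longrightarrow> ordLess2 (card_of A) (card_of F))"

end

theory Submission
  imports Defs
begin

(* At a limit step, refine every child S_n by the induction
   hypothesis, so that its maximal strata converge to its core x_n relative to \<U>.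
   For U \<in> \<U> containing x, the cores x_n eventually lie in U, and then all but finitely
   many strata of the n-th refined child lie in U; let G_U(n) be the index from which on
   they do. Fewer than \<bb> functions G_U are eventually dominated by a single g, and keeping
   only the strata of index \<ge> g(n) in the n-th child puts almost every child inside each
   such U. Dropping strata yields proper subscaffolds because the height of a scaffold is
   determined, up to order isomorphism, by its stratification. *)

lemma least_strict_ub_unique:
  assumes "least_strict_ub \<alpha> \<alpha>s" "least_strict_ub \<beta> \<alpha>s"
  shows "ordIso2 \<alpha> \<beta>"
  using assms unfolding least_strict_ub_def ordIso_iff_ordLeq by blast

lemma least_strict_ub_ordIso:
  assumes lub: "least_strict_ub \<alpha> \<alpha>s" and iso: "ordIso2 \<alpha> \<beta>"
  shows "least_strict_ub \<beta> \<alpha>s"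
  unfolding least_strict_ub_def
proof (intro conjI allI impI)
  show "Well_order \<beta>"
    using iso unfolding ordIso_def by simp
  show "ordLess2 (\<alpha>s n) \<beta>" for n
    using lub iso ordLess_ordIso_trans unfolding least_strict_ub_def by blast
  show "ordLeq2 \<beta> \<gamma>" if "Well_order \<gamma> \<and> (\<forall>n. ordLess2 (\<alpha>s n) \<gamma>)" for \<gamma> :: "nat rel"
    using lub that ordIso_ordLeq_trans[OF ordIso_symmetric[OF iso]]
    unfolding least_strict_ub_def by blast
qed

lemma least_strict_ub_cofinal:
  assumes lub: "least_strict_ub \<alpha> \<alpha>s"
    and below: "\<And>m. \<exists>n. ordLeq2 (\<beta>s m) (\<alpha>s n)"
    and above: "\<And>n. \<exists>m. ordLeq2 (\<alpha>s n) (\<beta>s m)"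
  shows "least_strict_ub \<alpha> \<beta>s"
  unfolding least_strict_ub_def
proof (intro conjI allI impI)
  show "Well_order \<alpha>"
    using lub unfolding least_strict_ub_def by blast
  show "ordLess2 (\<beta>s m) \<alpha>" for m
    using lub below[of m] ordLeq_ordLess_trans unfolding least_strict_ub_def by blast
  show "ordLeq2 \<alpha> \<gamma>" if "Well_order \<gamma> \<and> (\<forall>m. ordLess2 (\<beta>s m) \<gamma>)" for \<gamma> :: "nat rel"
    using lub that above ordLeq_ordLess_trans unfolding least_strict_ub_def by blast
qed

lemma empty_Field_ordIso:
  assumes "Well_order r" "Well_order r'" "Field r = {}" "Field r' = {}"
  shows "ordIso2 r r'"
  using assms unfolding ordIso_def iso_def embed_def
  by (auto intro!: exI[of _ id] simp: bij_betw_def)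

lemma scaffold_strata:
  assumes "scaffold X \<alpha> x S SS"
  shows "S \<subseteq> topspace X" and "x \<in> S" and "S \<in> SS"
    and "T \<in> SS \<Longrightarrow> T \<subseteq> S" and "T \<in> SS \<Longrightarrow> T \<noteq> {}"
proof -
  have "S \<subseteq> topspace X \<and> (\<forall>T\<in>SS. T \<subseteq> S \<and> T \<noteq> {})"
    using assms by induction fast+
  then show "S \<subseteq> topspace X" and "T \<in> SS \<Longrightarrow> T \<subseteq> S" and "T \<in> SS \<Longrightarrow> T \<noteq> {}"
    by blast+
  show "x \<in> S" "S \<in> SS"
    using assms by (cases; simp)+
qed

locale scaffold_step =
  fixes X :: "'a topology" and \<alpha>s :: "nat \<Rightarrow> nat rel" and xs :: "nat \<Rightarrow> 'a"
    and Ss :: "nat \<Rightarrow> 'a set" and SSs :: "nat \<Rightarrow> 'a set set"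
    and \<alpha> :: "nat rel" and x :: 'a and Us :: "nat \<Rightarrow> 'a set"
  assumes child: "\<And>n. scaffold X (\<alpha>s n) (xs n) (Ss n) (SSs n)"
    and heights_mono: "\<And>n. ordLeq2 (\<alpha>s n) (\<alpha>s (Suc n))"
    and height_lub: "least_strict_ub \<alpha> \<alpha>s"
    and core_in_topspace: "x \<in> topspace X"
    and cores_converge: "limitin X xs x sequentially"
    and open_nbhd: "\<And>n. openin X (Us n)"
    and nbhds_disjoint: "\<And>m n. m \<noteq> n \<Longrightarrow> Us m \<inter> Us n = {}"
    and closure_child_subset: "\<And>n. X closure_of (Ss n) \<subseteq> Us n"
    and core_notin_closure: "\<And>n. x \<notin> X closure_of (Us n)"
begin

abbreviation glued :: "'a set" where
  "glued \<equiv> {x} \<union> (\<Union>n. Ss n)"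

abbreviation glued_strat :: "'a set set" where
  "glued_strat \<equiv> {glued} \<union> (\<Union>n. SSs n)"

lemma scaffold_glued: "scaffold X \<alpha> x glued glued_strat"
  by (rule scaffold.step[OF child heights_mono height_lub core_in_topspace cores_converge
        open_nbhd nbhds_disjoint closure_child_subset core_notin_closure])

lemma child_subset_nbhd: "Ss n \<subseteq> Us n"
  using closure_of_subset[OF scaffold_strata(1)[OF child]] closure_child_subset by blast

lemma core_notin_child: "x \<notin> Ss n"
  using child_subset_nbhd core_notin_closure closure_of_subset[OF openin_subset[OF open_nbhd]]
  by blast

lemma children_disjoint: "m \<noteq> n \<Longrightarrow> Ss m \<inter> Ss n = {}"
  using child_subset_nbhd nbhds_disjoint by blast

lemma child_nonempty: "Ss n \<noteq> {}"
  using scaffold_strata(2)[OF child] by blast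

lemma inj_children: "inj Ss"
  by (metis children_disjoint child_nonempty inf.idem injI)

lemma child_strat: "T \<in> SSs n \<Longrightarrow> T \<subseteq> Ss n \<and> T \<noteq> {}"
  using scaffold_strata(4,5)[OF child] by blast

lemma strat_in_child_unique: "T \<in> SSs m \<Longrightarrow> T \<subseteq> Ss n \<Longrightarrow> m = n"
  using child_strat children_disjoint by blast

lemma restr_glued_child: "restr glued_strat (Ss n) = SSs n"
  unfolding restr_def using child_strat strat_in_child_unique core_notin_child by blast

lemma minus_strat_glued: "minus_strat glued glued_strat = range Ss"
proof -
  have proper: "glued_strat - {glued} = (\<Union>n. SSs n)"
    using child_strat core_notin_child by blast
  have maximal: "T' = Ss n" if "T' \<in> SSs m" "Ss n \<subseteq> T'" for T' m n
  proof -
    have "m = n"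
      using that child_strat[OF that(1)] child_nonempty children_disjoint by blast
    then show ?thesis
      using that child_strat by blast
  qed
  show ?thesis
    unfolding minus_strat_def proper
  proof (intro equalityI subsetI)
    fix T
    assume "T \<in> {T \<in> \<Union>(range SSs). \<forall>T'\<in>\<Union>(range SSs). T \<subseteq> T' \<longrightarrow> T' = T}"
    then obtain n where T: "T \<in> SSs n" and max: "\<forall>T'\<in>\<Union>(range SSs). T \<subseteq> T' \<longrightarrow> T' = T"
      by blast
    have "Ss n \<in> \<Union>(range SSs)"
      using scaffold_strata(3)[OF child] by blast
    then have "Ss n = T"
      using max child_strat[OF T] by blast
    then show "T \<in> range Ss"
      by blast
  next
    fix T
    assume "T \<in> range Ss"
    then obtain n where T: "T = Ss n"
      by blast
    have "Ss n \<in> \<Union>(range SSs)"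
      using scaffold_strata(3)[OF child] by blast
    moreover have "\<forall>T'\<in>\<Union>(range SSs). Ss n \<subseteq> T' \<longrightarrow> T' = Ss n"
      using maximal by blast
    ultimately show "T \<in> {T \<in> \<Union>(range SSs). \<forall>T'\<in>\<Union>(range SSs). T \<subseteq> T' \<longrightarrow> T' = T}"
      unfolding T by blast
  qed
qed

lemma glued_ne_singleton: "glued \<noteq> {y}"
proof
  assume "glued = {y}"
  then have "Ss 0 \<subseteq> {y}" and "x = y"
    by blast+
  then show False
    using child_nonempty[of 0] core_notin_child[of 0] by blast
qed

end

lemma scaffold_cases [consumes 1, case_names zero step]:
  assumes "scaffold X \<alpha> x S SS"
  obtains "Well_order \<alpha>" "Field \<alpha> = {}" "x \<in> topspace X" "S = {x}" "SS = {{x}}"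
  | \<alpha>s xs Ss SSs Us where "scaffold_step X \<alpha>s xs Ss SSs \<alpha> x Us"
      "S = {x} \<union> (\<Union>n. Ss n)" "SS = {{x} \<union> (\<Union>n. Ss n)} \<union> (\<Union>n. SSs n)"
  using assms
proof cases
  case zero
  then show ?thesis using that(1) by blast
next
  case (step \<alpha>s xs Ss SSs Us)
  have "scaffold_step X \<alpha>s xs Ss SSs \<alpha> x Us"
    by (rule scaffold_step.intro) (fact step)+
  from this step(1,2) show ?thesis by (rule that(2))
qed

lemma scaffold_induct [consumes 1, case_names zero step]:
  assumes "scaffold X \<alpha> x S SS"
    and "\<And>\<alpha> x. Well_order \<alpha> \<Longrightarrow> Field \<alpha> = {} \<Longrightarrow> x \<in> topspace X \<Longrightarrow> P \<alpha> x {x} {{x}}"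
    and "\<And>\<alpha>s xs Ss SSs \<alpha> x Us. scaffold_step X \<alpha>s xs Ss SSs \<alpha> x Us \<Longrightarrow>
           (\<And>n. P (\<alpha>s n) (xs n) (Ss n) (SSs n)) \<Longrightarrow>
           P \<alpha> x ({x} \<union> (\<Union>n. Ss n)) ({{x} \<union> (\<Union>n. Ss n)} \<union> (\<Union>n. SSs n))"
  shows "P \<alpha> x S SS"
  using assms(1)
proof induction
  case (zero \<alpha> x)
  then show ?case by (rule assms(2))
next
  case (step \<alpha>s xs Ss SSs \<alpha> x Us)
  have "scaffold_step X \<alpha>s xs Ss SSs \<alpha> x Us"
    by (rule scaffold_step.intro) (fact step)+
  then show ?case by (rule assms(3)) (fact step)
qed

lemma minus_strat_singleton: "minus_strat {x} {{x}} = {}"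
  unfolding minus_strat_def by auto

lemma scaffold_core:
  assumes "scaffold X \<alpha> x S SS"
  shows "S - \<Union>(minus_strat S SS) = {x}"
  using assms
proof (cases rule: scaffold_cases)
  case zero
  then show ?thesis by (simp add: minus_strat_singleton)
next
  case (step \<alpha>s xs Ss SSs Us)
  interpret scaffold_step X \<alpha>s xs Ss SSs \<alpha> x Us by fact
  show ?thesis
    unfolding step(2,3) minus_strat_glued using core_notin_child by blast
qed

lemma scaffold_core_unique: "scaffold X \<alpha> x S SS \<Longrightarrow> scaffold X \<beta> y S SS \<Longrightarrow> x = y"
  by (metis scaffold_core singleton_inject)

lemma cor_scaffold: "scaffold X \<alpha> x S SS \<Longrightarrow> cor X S SS = x"
  unfolding cor_def by (blast intro: the_equality dest: scaffold_core_unique)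

lemma scaffold_height_ordIso:
  assumes "scaffold X \<gamma> x S SS" "ordIso2 \<gamma> \<beta>"
  shows "scaffold X \<beta> x S SS"
  using assms(1)
proof (cases rule: scaffold_cases)
  case zero
  have "Field \<beta> = {}"
    using assms(2) zero(2) unfolding ordIso_def iso_def bij_betw_def by auto
  then show ?thesis
    using zero assms(2) unfolding ordIso_def by (auto intro: scaffold.zero)
next
  case (step \<alpha>s xs Ss SSs Us)
  interpret scaffold_step X \<alpha>s xs Ss SSs \<gamma> x Us by fact
  show ?thesis
    unfolding step(2,3)
    by (rule scaffold.step[OF child heights_mono least_strict_ub_ordIso[OF height_lub assms(2)]
          core_in_topspace cores_converge open_nbhd nbhds_disjoint closure_child_subset
          core_notin_closure])
qed

lemma scaffold_height_unique:
  "scaffold X \<beta> y S SS \<Longrightarrow> scaffold X \<gamma> z S SS \<Longrightarrow> ordIso2 \<beta> \<gamma>"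
proof (induction arbitrary: \<gamma> z rule: scaffold_induct)
  case (zero \<alpha> x)
  note empty = zero.hyps(1,2)
  from zero.prems show ?case
  proof (cases rule: scaffold_cases)
    case zero
    show ?thesis
      by (rule empty_Field_ordIso[OF empty(1) zero(1) empty(2) zero(2)])
  next
    case (step \<alpha>s' xs' Ss' SSs' Us')
    interpret scaffold_step X \<alpha>s' xs' Ss' SSs' \<gamma> z Us' by fact
    show ?thesis
      using glued_ne_singleton[of x] step(2) by simp
  qed
next
  case (step \<alpha>s xs Ss SSs \<alpha> x Us)
  interpret L: scaffold_step X \<alpha>s xs Ss SSs \<alpha> x Us by fact
  note IH = step.IH
  from step.prems show ?case
  proof (cases rule: scaffold_cases)
    case zero
    then show ?thesis
      using L.glued_ne_singleton[of z] by simp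
  next
    case (step \<alpha>s' xs' Ss' SSs' Us')
    interpret L': scaffold_step X \<alpha>s' xs' Ss' SSs' \<gamma> z Us' by fact
    have "minus_strat L.glued L.glued_strat = minus_strat L'.glued L'.glued_strat"
      using step(2,3) by (rule arg_cong2)
    then have same_children: "range Ss = range Ss'"
      by (simp only: L.minus_strat_glued L'.minus_strat_glued)
    have matched: "ordIso2 (\<alpha>s n) (\<alpha>s' m)" if same: "Ss n = Ss' m" for n m
    proof -
      have "SSs n = restr L.glued_strat (Ss n)"
        by (rule L.restr_glued_child[symmetric])
      also have "\<dots> = restr L'.glued_strat (Ss' m)"
        by (simp only: step(3) same)
      also have "\<dots> = SSs' m"
        by (rule L'.restr_glued_child)
      finally have "scaffold X (\<alpha>s' m) (xs' m) (Ss n) (SSs n)"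
        using L'.child[of m] same by simp
      then show ?thesis
        by (rule IH)
    qed
    have "least_strict_ub \<alpha> \<alpha>s'"
    proof (rule least_strict_ub_cofinal[OF L.height_lub])
      show "\<exists>n. ordLeq2 (\<alpha>s' m) (\<alpha>s n)" for m
      proof -
        have "Ss' m \<in> range Ss"
          by (simp add: same_children)
        then obtain n where "Ss n = Ss' m"
          by blast
        then have "ordIso2 (\<alpha>s' m) (\<alpha>s n)"
          using matched ordIso_symmetric by blast
        then show ?thesis
          using ordIso_iff_ordLeq by blast
      qed
      show "\<exists>m. ordLeq2 (\<alpha>s n) (\<alpha>s' m)" for n
      proof -
        have "Ss n \<in> range Ss'"
          by (simp add: same_children[symmetric])
        then obtain m where "Ss n = Ss' m"
          by blast
        then show ?thesis
          using matched ordIso_iff_ordLeq by blast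
      qed
    qed
    then show ?thesis
      using least_strict_ub_unique L'.height_lub by blast
  qed
qed

lemma subscaf_subset: "subscaf X A AA B BB \<Longrightarrow> A \<subseteq> B"
  by (erule subscaf.cases) blast

context scaffold_step
begin

lemma heights_mono_le: "m \<le> n \<Longrightarrow> ordLeq2 (\<alpha>s m) (\<alpha>s n)"
proof (induction n rule: dec_induct)
  case base
  show ?case
    using ordLeq_reflexive ordLeq_Well_order_simp[OF heights_mono[of m]] by blast
next
  case (step k)
  then show ?case
    using ordLeq_transitive heights_mono by blast
qed

lemma subsequence_step:
  fixes r :: "nat \<Rightarrow> nat"
  assumes r: "strict_mono r"
    and sub_child: "\<And>k. scaffold X (\<alpha>s (r k)) (xs (r k)) (S' k) (SS' k)"
    and sub_subset: "\<And>k. S' k \<subseteq> Ss (r k)"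
  shows "scaffold_step X (\<lambda>k. \<alpha>s (r k)) (\<lambda>k. xs (r k)) S' SS' \<alpha> x (\<lambda>k. Us (r k))"
proof
  show "scaffold X (\<alpha>s (r k)) (xs (r k)) (S' k) (SS' k)" for k
    by (rule sub_child)
  show "ordLeq2 (\<alpha>s (r k)) (\<alpha>s (r (Suc k)))" for k
    using r by (simp add: heights_mono_le strict_mono_less_eq)
  show "least_strict_ub \<alpha> (\<lambda>k. \<alpha>s (r k))"
  proof (rule least_strict_ub_cofinal[OF height_lub])
    show "\<exists>n. ordLeq2 (\<alpha>s (r k)) (\<alpha>s n)" for k
      using heights_mono by blast
    show "\<exists>k. ordLeq2 (\<alpha>s n) (\<alpha>s (r k))" for n
      using heights_mono_le[OF seq_suble[OF r]] by blast
  qed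
  show "x \<in> topspace X"
    by (rule core_in_topspace)
  show "limitin X (\<lambda>k. xs (r k)) x sequentially"
    using limitin_subsequence[OF r cores_converge] by (simp add: o_def)
  show "openin X (Us (r k))" for k
    by (rule open_nbhd)
  show "Us (r m) \<inter> Us (r n) = {}" if "m \<noteq> n" for m n
    using nbhds_disjoint r that by (metis strict_mono_eq)
  show "X closure_of (S' k) \<subseteq> Us (r k)" for k
    using closure_of_mono[OF sub_subset] closure_child_subset by blast
  show "x \<notin> X closure_of (Us (r k))" for k
    by (rule core_notin_closure)
qed

lemma subscaf_glued_subsequence:
  fixes r :: "nat \<Rightarrow> nat"
  assumes r: "strict_mono r"
    and sub_child: "\<And>k. scaffold X (\<alpha>s (r k)) (xs (r k)) (S' k) (SS' k)"
    and sub: "\<And>k. subscaf X (S' k) (SS' k) (Ss (r k)) (SSs (r k))"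
  shows "subscaf X ({x} \<union> (\<Union>k. S' k)) ({{x} \<union> (\<Union>k. S' k)} \<union> (\<Union>k. SS' k)) glued glued_strat"
proof -
  interpret R: scaffold_step X "\<lambda>k. \<alpha>s (r k)" "\<lambda>k. xs (r k)" S' SS' \<alpha> x "\<lambda>k. Us (r k)"
    by (rule subsequence_step[OF r sub_child subscaf_subset[OF sub]])
  show ?thesis
  proof (rule subscaf.intros)
    show "R.glued \<subseteq> glued"
      using subscaf_subset[OF sub] by blast
    show "stratification X R.glued R.glued_strat"
      using R.scaffold_glued unfolding stratification_def by blast
    show "cor X R.glued R.glued_strat = cor X glued glued_strat"
      using cor_scaffold[OF R.scaffold_glued] cor_scaffold[OF scaffold_glued] by simp
    show "minus_strat glued glued_strat \<noteq> {} \<longrightarrow> minus_strat R.glued R.glued_strat \<noteq> {}"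
      unfolding R.minus_strat_glued by blast
    show "\<forall>B'\<in>minus_strat R.glued R.glued_strat. \<forall>\<beta>. is_scaffold X \<beta> B' (restr R.glued_strat B') \<longrightarrow>
        (\<exists>B\<in>minus_strat glued glued_strat. is_scaffold X \<beta> B (restr glued_strat B) \<and>
           subscaf X B' (restr R.glued_strat B') B (restr glued_strat B))"
    proof (intro ballI allI impI)
      fix B' \<beta>
      assume "B' \<in> minus_strat R.glued R.glued_strat" and "is_scaffold X \<beta> B' (restr R.glued_strat B')"
      then obtain k y where B': "B' = S' k" and "scaffold X \<beta> y (S' k) (SS' k)"
        unfolding R.minus_strat_glued is_scaffold_def using R.restr_glued_child by auto
      then have "ordIso2 (\<alpha>s (r k)) \<beta>"
        using scaffold_height_unique[OF sub_child] by blast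
      then have "scaffold X \<beta> (xs (r k)) (Ss (r k)) (SSs (r k))"
        by (rule scaffold_height_ordIso[OF child])
      moreover have "Ss (r k) \<in> minus_strat glued glued_strat"
        unfolding minus_strat_glued by blast
      ultimately show "\<exists>B\<in>minus_strat glued glued_strat. is_scaffold X \<beta> B (restr glued_strat B) \<and>
           subscaf X B' (restr R.glued_strat B') B (restr glued_strat B)"
        using sub[of k] unfolding B' R.restr_glued_child is_scaffold_def
        by (metis restr_glued_child)
    qed
  qed
qed

end

lemma subscaf_refl: "scaffold X \<alpha> x S SS \<Longrightarrow> subscaf X S SS S SS"
proof (induction rule: scaffold_induct)
  case (zero \<alpha> x)
  then have "scaffold X \<alpha> x {x} {{x}}"
    by (rule scaffold.zero)
  then show ?case
    by (intro subscaf.intros) (auto simp: stratification_def minus_strat_singleton)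
next
  case (step \<alpha>s xs Ss SSs \<alpha> x Us)
  interpret scaffold_step X \<alpha>s xs Ss SSs \<alpha> x Us by fact
  show ?case
    by (rule subscaf_glued_subsequence[of "\<lambda>k. k"]) (simp_all add: strict_mono_def child step.IH)
qed

lemma subscaf_trans:
  "subscaf X A AA B BB \<Longrightarrow> subscaf X B BB C CC \<Longrightarrow> subscaf X A AA C CC"
proof (induction arbitrary: C CC rule: subscaf.induct)
  case (1 S' S SS' SS)
  from "1.prems" show ?case
  proof cases
    case 1
    show ?thesis
    proof (rule subscaf.intros)
      show "S' \<subseteq> C" and "stratification X S' SS'" and "cor X S' SS' = cor X C CC"
        and "minus_strat C CC \<noteq> {} \<longrightarrow> minus_strat S' SS' \<noteq> {}"
        using "1.hyps"(1-4) 1(1-4) by auto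
      show "\<forall>B'\<in>minus_strat S' SS'. \<forall>\<beta>. is_scaffold X \<beta> B' (restr SS' B') \<longrightarrow>
        (\<exists>B\<in>minus_strat C CC. is_scaffold X \<beta> B (restr CC B) \<and>
           subscaf X B' (restr SS' B') B (restr CC B))"
      proof (intro ballI allI impI)
        fix B' \<beta>
        assume "B' \<in> minus_strat S' SS'" and "is_scaffold X \<beta> B' (restr SS' B')"
        then obtain B1 where B1: "B1 \<in> minus_strat S SS" "is_scaffold X \<beta> B1 (restr SS B1)"
          "\<And>C CC. subscaf X B1 (restr SS B1) C CC \<Longrightarrow> subscaf X B' (restr SS' B') C CC"
          using "1.IH" by blast
        then obtain B2 where "B2 \<in> minus_strat C CC" "is_scaffold X \<beta> B2 (restr CC B2)"
          "subscaf X B1 (restr SS B1) B2 (restr CC B2)"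
          using 1(5) by blast
        then show "\<exists>B\<in>minus_strat C CC. is_scaffold X \<beta> B (restr CC B) \<and>
           subscaf X B' (restr SS' B') B (restr CC B)"
          using B1(3) by blast
      qed
    qed
  qed
qed

(* C j is the j-th maximal stratum of A (empty for a 0-scaffold); cutting off an initial
   segment of them still leaves a subscaffold of the same height and core. *)
lemma scaffold_tails:
  assumes "scaffold X \<alpha> y A AA"
  obtains C :: "nat \<Rightarrow> 'a set" where
    "\<And>U. finite {T \<in> minus_strat A AA. \<not> T \<subseteq> U} \<Longrightarrow> \<exists>k. \<forall>j\<ge>k. C j \<subseteq> U"
    "\<And>k. \<exists>A' AA'. scaffold X \<alpha> y A' AA' \<and> subscaf X A' AA' A AA \<and> A' \<subseteq> {y} \<union> \<Union>(C ` {k..})"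
  using assms
proof (cases rule: scaffold_cases)
  case zero
  show ?thesis
  proof (rule that[of "\<lambda>_. {}"])
    show "\<exists>k. \<forall>j\<ge>k. ({} :: 'a set) \<subseteq> U" for U
      by blast
    show "\<exists>A' AA'. scaffold X \<alpha> y A' AA' \<and> subscaf X A' AA' A AA \<and> A' \<subseteq> {y} \<union> \<Union>((\<lambda>_. {}) ` {k..})" for k
      using assms subscaf_refl[OF assms] zero(4) by blast
  qed
next
  case (step \<alpha>s xs Ss SSs Us)
  interpret scaffold_step X \<alpha>s xs Ss SSs \<alpha> y Us by fact
  show ?thesis
  proof (rule that[of Ss])
    fix U
    assume "finite {T \<in> minus_strat A AA. \<not> T \<subseteq> U}"
    then have "finite (Ss -` {T \<in> minus_strat A AA. \<not> T \<subseteq> U})"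
      by (rule finite_vimageI) (rule inj_children)
    moreover have "Ss -` {T \<in> minus_strat A AA. \<not> T \<subseteq> U} = {j. \<not> Ss j \<subseteq> U}"
      unfolding step(2,3) minus_strat_glued by blast
    ultimately have "eventually (\<lambda>j. Ss j \<subseteq> U) sequentially"
      by (simp add: eventually_cofinite flip: cofinite_eq_sequentially)
    then show "\<exists>k. \<forall>j\<ge>k. Ss j \<subseteq> U"
      by (simp add: eventually_sequentially)
  next
    fix k :: nat
    have shift: "strict_mono (\<lambda>j. j + k)"
      by (simp add: strict_mono_def)
    interpret R: scaffold_step X "\<lambda>j. \<alpha>s (j + k)" "\<lambda>j. xs (j + k)" "\<lambda>j. Ss (j + k)"
        "\<lambda>j. SSs (j + k)" \<alpha> y "\<lambda>j. Us (j + k)"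
      by (rule subsequence_step[OF shift child subset_refl])
    have "subscaf X R.glued R.glued_strat A AA"
      unfolding step(2,3)
      by (rule subscaf_glued_subsequence[OF shift child subscaf_refl[OF child]])
    moreover have "R.glued \<subseteq> {y} \<union> \<Union>(Ss ` {k..})"
      by auto
    ultimately show "\<exists>A' AA'. scaffold X \<alpha> y A' AA' \<and> subscaf X A' AA' A AA \<and> A' \<subseteq> {y} \<union> \<Union>(Ss ` {k..})"
      using R.scaffold_glued by blast
  qed
qed

lemma card_less_b_dominated:
  assumes "card_less_b A"
  obtains g where "\<And>a. a \<in> A \<Longrightarrow> ev_dom (f a) g"
proof -
  have "\<not> unbounded_family (f ` A)"
  proof
    assume "unbounded_family (f ` A)"
    then have "ordLess2 (card_of A) (card_of (f ` A))"
      using assms unfolding card_less_b_def by blast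
    then show False
      using card_of_image not_ordLess_ordLeq by blast
  qed
  then show ?thesis
    using that unfolding unbounded_family_def by blast
qed

definition converges_wrt :: "'a set set \<Rightarrow> 'a \<Rightarrow> 'a set set \<Rightarrow> bool" where
  "converges_wrt \<U> x \<T> \<longleftrightarrow> (\<forall>U\<in>\<U>. x \<in> U \<longrightarrow> finite {T \<in> \<T>. \<not> T \<subseteq> U})"

lemma (in scaffold_step) converging_refinement_glued:
  assumes opn: "\<forall>U\<in>\<U>. openin X U" and b: "card_less_b \<U>"
    and IH: "\<And>n. \<exists>S' SS'. scaffold X (\<alpha>s n) (xs n) S' SS' \<and> subscaf X S' SS' (Ss n) (SSs n) \<and>
               converges_wrt \<U> (xs n) (minus_strat S' SS')"
  shows "\<exists>S' SS'. scaffold X \<alpha> x S' SS' \<and> subscaf X S' SS' glued glued_strat \<and>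
           converges_wrt \<U> x (minus_strat S' SS')"
proof -
  obtain S1 SS1 where S1: "\<And>n. scaffold X (\<alpha>s n) (xs n) (S1 n) (SS1 n)"
      "\<And>n. subscaf X (S1 n) (SS1 n) (Ss n) (SSs n)"
      "\<And>n. converges_wrt \<U> (xs n) (minus_strat (S1 n) (SS1 n))"
    using IH by metis
  have "\<forall>n. \<exists>C :: nat \<Rightarrow> 'a set.
      (\<forall>U. finite {T \<in> minus_strat (S1 n) (SS1 n). \<not> T \<subseteq> U} \<longrightarrow> (\<exists>k. \<forall>j\<ge>k. C j \<subseteq> U)) \<and>
      (\<forall>k. \<exists>A' AA'. scaffold X (\<alpha>s n) (xs n) A' AA' \<and> subscaf X A' AA' (S1 n) (SS1 n) \<and>
         A' \<subseteq> {xs n} \<union> \<Union>(C ` {k..}))" (is "\<forall>n. \<exists>C. ?tails n C")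
  proof
    fix n
    show "\<exists>C. ?tails n C"
      by (rule scaffold_tails[OF S1(1)[of n]]) meson
  qed
  then obtain C where "\<forall>n. ?tails n (C n)"
    by (rule choice[THEN exE])
  then have C_conv: "\<And>n U. finite {T \<in> minus_strat (S1 n) (SS1 n). \<not> T \<subseteq> U} \<Longrightarrow>
        \<exists>k. \<forall>j\<ge>k. C n j \<subseteq> U"
    and C_tail: "\<And>n k. \<exists>A' AA'. scaffold X (\<alpha>s n) (xs n) A' AA' \<and> subscaf X A' AA' (S1 n) (SS1 n) \<and>
        A' \<subseteq> {xs n} \<union> \<Union>(C n ` {k..})"
    by meson+
  \<comment> \<open>\<open>LEAST\<close> is junk where no such \<open>k\<close> exists; it is only used where one does.\<close>
  define G where "G U n = (LEAST k :: nat. \<forall>j\<ge>k. C n j \<subseteq> U)" for U n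
  obtain g where g: "\<And>U. U \<in> \<U> \<Longrightarrow> ev_dom (G U) g"
    using card_less_b_dominated[OF b] by blast
  have "\<exists>A' AA'. scaffold X (\<alpha>s n) (xs n) A' AA' \<and> subscaf X A' AA' (S1 n) (SS1 n) \<and>
      A' \<subseteq> {xs n} \<union> \<Union>(C n ` {g n..})" for n
    by (rule C_tail)
  then obtain S2 SS2 where S2: "\<And>n. scaffold X (\<alpha>s n) (xs n) (S2 n) (SS2 n)"
      "\<And>n. subscaf X (S2 n) (SS2 n) (S1 n) (SS1 n)" "\<And>n. S2 n \<subseteq> {xs n} \<union> \<Union>(C n ` {g n..})"
    by metis
  have S2_sub: "subscaf X (S2 n) (SS2 n) (Ss n) (SSs n)" for n
    using subscaf_trans[OF S2(2) S1(2)] .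
  have id: "strict_mono (\<lambda>n::nat. n)"
    by (simp add: strict_mono_def)
  interpret R: scaffold_step X \<alpha>s xs S2 SS2 \<alpha> x Us
    using subsequence_step[OF id S2(1) subscaf_subset[OF S2_sub]] by simp
  have "converges_wrt \<U> x (range S2)"
    unfolding converges_wrt_def
  proof (intro ballI impI)
    fix U
    assume U: "U \<in> \<U>" "x \<in> U"
    have "eventually (\<lambda>n. xs n \<in> U) sequentially"
      using cores_converge opn U unfolding limitin_def by blast
    moreover have "eventually (\<lambda>n. G U n \<le> g n) sequentially"
      using g[OF U(1)] unfolding ev_dom_def .
    ultimately have "eventually (\<lambda>n. S2 n \<subseteq> U) sequentially"
    proof eventually_elim
      case (elim n)
      then have "\<exists>k. \<forall>j\<ge>k. C n j \<subseteq> U"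
        using S1(3) U C_conv unfolding converges_wrt_def by blast
      then have "\<forall>j\<ge>G U n. C n j \<subseteq> U"
        unfolding G_def by (rule LeastI_ex)
      then have "C n j \<subseteq> U" if "g n \<le> j" for j
        using elim(2) that le_trans by blast
      then show "S2 n \<subseteq> U"
        using elim(1) S2(3)[of n] by blast
    qed
    then have "finite {n. \<not> S2 n \<subseteq> U}"
      by (simp add: eventually_cofinite flip: cofinite_eq_sequentially)
    then show "finite {T \<in> range S2. \<not> T \<subseteq> U}"
      by (rule finite_subset[rotated, OF finite_imageI]) blast
  qed
  then have "converges_wrt \<U> x (minus_strat R.glued R.glued_strat)"
    by (simp only: R.minus_strat_glued)
  then show ?thesis
    using R.scaffold_glued subscaf_glued_subsequence[OF id S2(1) S2_sub] by blast
qed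

lemma converging_refinement:
  assumes "scaffold X \<alpha> x S SS" and "\<forall>U\<in>\<U>. openin X U" and "card_less_b \<U>"
  shows "\<exists>S' SS'. scaffold X \<alpha> x S' SS' \<and> subscaf X S' SS' S SS \<and> converges_wrt \<U> x (minus_strat S' SS')"
  using assms(1)
proof (induction rule: scaffold_induct)
  case (zero \<alpha> x)
  then have "scaffold X \<alpha> x {x} {{x}}"
    by (rule scaffold.zero)
  then show ?case
    using subscaf_refl by (fastforce simp: converges_wrt_def minus_strat_singleton)
next
  case (step \<alpha>s xs Ss SSs \<alpha> x Us)
  interpret scaffold_step X \<alpha>s xs Ss SSs \<alpha> x Us by fact
  show ?case
    by (rule converging_refinement_glued[OF assms(2,3) step.IH])
qed

theorem lemma12:
  fixes X :: "'a topology" and \<alpha> :: "nat rel" and x :: 'a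
    and S :: "'a set" and SS :: "'a set set" and \<U> :: "'a set set"
  assumes "scaffold X \<alpha> x S SS"
    and "\<forall>U \<in> \<U>. openin X U"
    and "card_less_b \<U>"
  shows "\<exists>S' SS'. subscaf X S' SS' S SS \<and>
           (\<forall>U \<in> \<U>. cor X S' SS' \<in> U \<longrightarrow> finite {T \<in> minus_strat S' SS'. \<not> T \<subseteq> U})"
proof -
  obtain S' SS' where "scaffold X \<alpha> x S' SS'" "subscaf X S' SS' S SS"
    "converges_wrt \<U> x (minus_strat S' SS')"
    using converging_refinement[OF assms] by blast
  then show ?thesis
    using cor_scaffold unfolding converges_wrt_def by metis
qed

end
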